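(* Let $D$ be a finite-dimensional central division algebra over a field $F$ of characteristic $0$ with involution $\ast$, and let $K$ be a maximal subfield of $D$ with $K^\ast\subseteq K$. Then there exists a map $f\colon D\to K$ such that $f(1)=1$, $f(z^\ast)=f(z)^\ast$ for all $z\in D$, and $f(kzl)=kf(z)l$ for all $k,l\in K$ and $z\in D$ (in particular $f$ is additive).
   Context: A maximal subfield is a subfield equal to its own centralizer in $D$. An involution is an additive anti-automorphism of order at most $2$. *)

theory Defs
  imports Main
begin

definition centralizer :: "'a::ring set \<Rightarrow> 'a set" where
  "centralizer S = {x. \<forall>s\<in>S. x * s = s * x}"

abbreviation center :: "'a::ring set" where
  "center \<equiv> centralizer UNIV"

text \<open>D is finite-dimensional over its center (the base field F of a central algebra).\<close>
definition finite_dim_over_center :: "'a::division_ring itself \<Rightarrow> bool" where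
  "finite_dim_over_center _ \<longleftrightarrow>
     (\<exists>B::'a set. finite B \<and>
        (\<forall>x. \<exists>c. (\<forall>b\<in>B. c b \<in> center) \<and> x = (\<Sum>b\<in>B. c b * b)))"

definition is_involution :: "('a::ring \<Rightarrow> 'a) \<Rightarrow> bool" where
  "is_involution s \<longleftrightarrow>
     (\<forall>x y. s (x + y) = s x + s y) \<and>
     (\<forall>x y. s (x * y) = s y * s x) \<and>
     (\<forall>x. s (s x) = x)"

definition is_subfield :: "'a::division_ring set \<Rightarrow> bool" where
  "is_subfield K \<longleftrightarrow>
     0 \<in> K \<and> 1 \<in> K \<and>
     (\<forall>x\<in>K. \<forall>y\<in>K. x + y \<in> K \<and> x * y \<in> K \<and> x * y = y * x) \<and>
     (\<forall>x\<in>K. - x \<in> K \<and> inverse x \<in> K)"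

definition maximal_subfield :: "'a::division_ring set \<Rightarrow> bool" where
  "maximal_subfield K \<longleftrightarrow> is_subfield K \<and> centralizer K = K"

end

theory Submission
  imports Defs "HOL.Vector_Spaces"
begin

(* The key construction is, for a single a \<in> K: choose a polynomial p over F with p(a) = 0 and
   p'(a) \<noteq> 0 (possible in characteristic 0), and let z \<mapsto> inverse(p'(a)) * Dp(a)[z], where Dp(a)[z]
   is the directional derivative of p at a.  Since p(a) = 0 this derivative commutes with a, and
   it is a bimodule map over everything commuting with a.  Composing such maps over an F-basis of
   K yields a map into the centralizer of K, which is K itself.  Finally, averaging f with
   z \<mapsto> star(f(star z)) gives compatibility with the involution. *)

lemma centerD: "x \<in> (center :: 'a::ring set) \<Longrightarrow> x * y = y * x"
  by (auto simp: centralizer_def)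

lemma of_nat_center: "of_nat n \<in> (center :: 'a::ring_1 set)"
  by (auto simp: centralizer_def mult_of_nat_commute)

lemma center_closed:
  fixes x y :: "'a::division_ring"
  assumes x: "x \<in> center" and y: "y \<in> center"
  shows "x + y \<in> center" "x * y \<in> center" "- x \<in> center" "inverse x \<in> center"
proof -
  have "x * y * s = s * (x * y)" for s
    by (metis centerD[OF x] centerD[OF y] mult.assoc)
  then show "x * y \<in> center" by (simp add: centralizer_def)
  show "inverse x \<in> center"
    using centerD[OF x] by (simp add: centralizer_def mult_commute_imp_mult_inverse_commute)
qed (use x y in \<open>auto simp: centralizer_def algebra_simps\<close>)

(* The center F as a type of its own, so that D becomes a vector space over F in the
   sense of the library locale vector_space (which needs the scalars to form a field). *)
typedef (overloaded) ('a::division_ring) central = "center :: 'a set"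
  using of_nat_center by blast

setup_lifting type_definition_central

instantiation central :: (division_ring) field
begin
lift_definition zero_central :: "'a central" is 0 by (rule of_nat_center[of 0, simplified])
lift_definition one_central :: "'a central" is 1 by (rule of_nat_center[of 1, simplified])
lift_definition plus_central :: "'a central \<Rightarrow> 'a central \<Rightarrow> 'a central" is "(+)"
  by (rule center_closed)
lift_definition uminus_central :: "'a central \<Rightarrow> 'a central" is uminus
  by (rule center_closed)
lift_definition minus_central :: "'a central \<Rightarrow> 'a central \<Rightarrow> 'a central" is "(-)"
  by (simp only: diff_conv_add_uminus center_closed)
lift_definition times_central :: "'a central \<Rightarrow> 'a central \<Rightarrow> 'a central" is "(*)"
  by (rule center_closed)
lift_definition inverse_central :: "'a central \<Rightarrow> 'a central" is inverse
  by (rule center_closed)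
lift_definition divide_central :: "'a central \<Rightarrow> 'a central \<Rightarrow> 'a central" is "(/)"
  by (simp only: divide_inverse center_closed)
instance
  by standard (transfer; auto simp: algebra_simps divide_inverse centerD)+
end

interpretation cspace: vector_space "\<lambda>(c::'a::division_ring central) (x::'a). Rep_central c * x"
  by standard (transfer; simp add: algebra_simps)+

lemma Rep_central_eq_0_iff [simp]: "Rep_central c = 0 \<longleftrightarrow> c = 0"
  by transfer' simp

lemma independent_card_bound:
  assumes "finite_dim_over_center TYPE('d::division_ring)"
  obtains N where "\<And>S::'d set. cspace.independent S \<Longrightarrow> finite S \<and> card S \<le> N"
proof -
  obtain B :: "'d set" where B: "finite B"
    and coords: "\<And>x. \<exists>c. (\<forall>b\<in>B. c b \<in> center) \<and> x = (\<Sum>b\<in>B. c b * b)"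
    using assms unfolding finite_dim_over_center_def by blast
  have "x \<in> cspace.span B" for x
  proof -
    obtain c where c: "\<forall>b\<in>B. c b \<in> center" "x = (\<Sum>b\<in>B. c b * b)" using coords by blast
    have "x = (\<Sum>b\<in>B. Rep_central (Abs_central (c b)) * b)"
      using c by (simp add: Abs_central_inverse)
    also have "\<dots> \<in> cspace.span B"
      by (intro cspace.span_sum cspace.span_scale cspace.span_base)
    finally show ?thesis .
  qed
  then show ?thesis using that cspace.independent_span_bound[OF B] by blast
qed

(* Every a in D is algebraic over F: the powers a^0, ..., a^N cannot be independent
   once N exceeds the dimension, so some nontrivial F-polynomial vanishes at a. *)
lemma central_relation:
  fixes a :: "'d::division_ring"
  assumes "finite_dim_over_center TYPE('d)"
  shows "\<exists>n c. (\<forall>k. c k \<in> center) \<and> (\<exists>k\<le>n. c k \<noteq> 0) \<and> (\<Sum>k\<le>n. c k * a ^ k) = 0"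
proof -
  obtain N where bound: "\<And>S::'d set. cspace.independent S \<Longrightarrow> finite S \<and> card S \<le> N"
    using independent_card_bound[OF assms] by blast
  show ?thesis
  proof (cases "inj_on (\<lambda>k. a ^ k) {..N}")
    case False
    then obtain i j where ij: "i < j" "a ^ i = a ^ j"
      unfolding inj_on_def by (metis linorder_neqE_nat)
    define c :: "nat \<Rightarrow> 'd" where "c k = of_bool (k = i) - of_bool (k = j)" for k
    have "(\<Sum>k\<le>j. c k * a ^ k)
        = (\<Sum>k\<le>j. of_bool (k = i) * a ^ k) - (\<Sum>k\<le>j. of_bool (k = j) * a ^ k)"
      by (simp add: c_def left_diff_distrib sum_subtractf)
    also have "\<dots> = a ^ i - a ^ j"
    proof -
      have "{..j} \<inter> {k. k = i} = {i}" "{..j} \<inter> {k. k = j} = {j}" using ij(1) by auto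
      then show ?thesis by simp
    qed
    finally have "(\<Sum>k\<le>j. c k * a ^ k) = 0" using ij(2) by simp
    moreover have "c k \<in> center" for k by (auto simp: c_def centralizer_def)
    moreover have "c i \<noteq> 0" "i \<le> j" using ij(1) by (simp_all add: c_def)
    ultimately show ?thesis by blast
  next
    case True
    define S where "S = (\<lambda>k. a ^ k) ` {..N}"
    have "card S = Suc N" using True by (simp add: S_def card_image)
    then have "cspace.dependent S" using bound by fastforce
    then obtain u where u: "\<exists>v\<in>S. u v \<noteq> 0" "(\<Sum>v\<in>S. Rep_central (u v) * v) = 0"
      using cspace.dependent_finite[of S] by (auto simp: S_def)
    define c where "c k = Rep_central (u (a ^ k))" for k :: nat
    have "(\<Sum>k\<le>N. c k * a ^ k) = 0"
      using u(2) by (simp add: S_def c_def sum.reindex[OF True])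
    moreover have "\<exists>k\<le>N. c k \<noteq> 0" using u(1) by (auto simp: S_def c_def)
    moreover have "c k \<in> center" for k using Rep_central by (simp add: c_def)
    ultimately show ?thesis by blast
  qed
qed

(* In characteristic 0 some polynomial p over F with p(a) = 0 has p'(a) \<noteq> 0: take p of
   least degree; p' has smaller degree and a nonzero leading coefficient, so p'(a) \<noteq> 0. *)
lemma separable_relation:
  fixes a :: "'d::{division_ring, ring_char_0}"
  assumes "finite_dim_over_center TYPE('d)"
  obtains m c where "\<And>k. c k \<in> center" "(\<Sum>k\<le>Suc m. c k * a ^ k) = 0"
    "(\<Sum>j\<le>m. of_nat (Suc j) * c (Suc j) * a ^ j) \<noteq> 0"
proof -
  define rel where
    "rel n \<longleftrightarrow> (\<exists>c. (\<forall>k. c k \<in> center) \<and> (\<exists>k\<le>n. c k \<noteq> 0) \<and> (\<Sum>k\<le>n. c k * a ^ k) = 0)"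
    for n
  define n where "n = (LEAST n. rel n)"
  have "rel n" unfolding n_def rel_def by (rule LeastI_ex) (use central_relation[OF assms] in blast)
  then obtain c where central: "\<And>k. c k \<in> center" and nonzero: "\<exists>k\<le>n. c k \<noteq> 0"
    and root: "(\<Sum>k\<le>n. c k * a ^ k) = 0"
    unfolding rel_def by blast
  have minimal: "\<not> rel k" if "k < n" for k
    using not_less_Least[of k rel] that unfolding n_def by blast
  have "n \<noteq> 0"
  proof
    assume "n = 0"
    then show False using nonzero root by simp
  qed
  then obtain m where n: "n = Suc m" using not0_implies_Suc by blast
  have top: "c (Suc m) \<noteq> 0"
  proof
    assume "c (Suc m) = 0"
    then have "(\<Sum>k\<le>m. c k * a ^ k) = 0" and "\<exists>k\<le>m. c k \<noteq> 0"
      using root nonzero n le_Suc_eq by auto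
    then have "rel m" unfolding rel_def using central by blast
    then show False using minimal n by simp
  qed
  define d where "d j = of_nat (Suc j) * c (Suc j)" for j
  have "d m \<noteq> 0" using top by (simp add: d_def del: of_nat_Suc)
  moreover have "d j \<in> center" for j unfolding d_def by (intro center_closed of_nat_center central)
  ultimately have "(\<Sum>j\<le>m. d j * a ^ j) \<noteq> 0" using minimal n unfolding rel_def by blast
  then show ?thesis using that central root n unfolding d_def by blast
qed

(* pow_deriv a z k = \<Sum>i<k. a^(k-1-i) * z * a^i is the derivative of x \<mapsto> x^k at a in
   direction z. *)
fun pow_deriv :: "'a::ring_1 \<Rightarrow> 'a \<Rightarrow> nat \<Rightarrow> 'a" where
  "pow_deriv a z 0 = 0"
| "pow_deriv a z (Suc k) = a * pow_deriv a z k + z * a ^ k"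

lemma pow_deriv_commutator: "a * pow_deriv a z k = pow_deriv a z k * a + a ^ k * z - z * a ^ k"
proof (induction k)
  case (Suc k)
  have "a * pow_deriv a z (Suc k) = a * (a * pow_deriv a z k) + a * z * a ^ k"
    by (simp add: distrib_left mult.assoc)
  also have "\<dots> = a * (pow_deriv a z k * a + a ^ k * z - z * a ^ k) + a * z * a ^ k"
    using Suc by simp
  also have "\<dots> = pow_deriv a z (Suc k) * a + a ^ Suc k * z - z * a ^ Suc k"
    by (simp add: algebra_simps power_commutes)
  finally show ?case .
qed simp

lemma pow_deriv_one: "pow_deriv a 1 (Suc k) = of_nat (Suc k) * a ^ k"
proof (induction k)
  case (Suc k)
  then have "pow_deriv a 1 (Suc (Suc k)) = a * (of_nat (Suc k) * a ^ k) + a ^ Suc k" by simp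
  also have "\<dots> = of_nat (Suc k) * a ^ Suc k + a ^ Suc k"
    by (metis mult.assoc mult_of_nat_commute power_Suc)
  also have "\<dots> = of_nat (Suc (Suc k)) * a ^ Suc k" by (simp add: algebra_simps)
  finally show ?case .
qed simp

lemma pow_deriv_add: "pow_deriv a (z + w) k = pow_deriv a z k + pow_deriv a w k"
  by (induction k) (simp_all add: algebra_simps)

lemma pow_deriv_bimod:
  assumes "x * a = a * x" "y * a = a * y"
  shows "pow_deriv a (x * z * y) k = x * pow_deriv a z k * y"
proof (induction k)
  case (Suc k)
  have ya: "y * a ^ k = a ^ k * y" using power_commuting_commutes[of a y k] assms(2) by simp
  have "pow_deriv a (x * z * y) (Suc k) = a * (x * pow_deriv a z k * y) + x * z * (y * a ^ k)"
    using Suc by (simp add: mult.assoc)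
  also have "\<dots> = x * (a * pow_deriv a z k) * y + x * (z * a ^ k) * y"
    using ya assms(1) by (metis mult.assoc)
  also have "\<dots> = x * pow_deriv a z (Suc k) * y" by (simp add: distrib_left distrib_right)
  finally show ?case .
qed simp

(* For p = \<Sum>k\<le>n. c k x^k, deriv_map c n a is the directional derivative of p at a. *)
definition deriv_map :: "(nat \<Rightarrow> 'a) \<Rightarrow> nat \<Rightarrow> 'a \<Rightarrow> 'a \<Rightarrow> 'a::ring_1" where
  "deriv_map c n a z = (\<Sum>k\<le>n. c k * pow_deriv a z k)"

context
  fixes c :: "nat \<Rightarrow> 'a::ring_1"
  assumes central: "\<And>k. c k \<in> center"
begin

lemma deriv_map_commutes:
  assumes root: "(\<Sum>k\<le>n. c k * a ^ k) = 0"
  shows "a * deriv_map c n a z = deriv_map c n a z * a"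
proof -
  have summand: "c k * (a * pow_deriv a z k)
      = c k * pow_deriv a z k * a + c k * a ^ k * z - z * (c k * a ^ k)" for k
    by (simp add: pow_deriv_commutator algebra_simps centerD[OF central])
  have "a * deriv_map c n a z = (\<Sum>k\<le>n. c k * (a * pow_deriv a z k))"
    unfolding deriv_map_def sum_distrib_left
    by (rule sum.cong) (metis centerD[OF central] mult.assoc)+
  also have "\<dots> = deriv_map c n a z * a + (\<Sum>k\<le>n. c k * a ^ k) * z - z * (\<Sum>k\<le>n. c k * a ^ k)"
    unfolding summand deriv_map_def
    by (simp add: sum_subtractf sum.distrib sum_distrib_left sum_distrib_right)
  finally show ?thesis using root by simp
qed

lemma deriv_map_bimod:
  assumes "x * a = a * x" "y * a = a * y"
  shows "deriv_map c n a (x * z * y) = x * deriv_map c n a z * y"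
proof -
  have "c k * pow_deriv a (x * z * y) k = x * (c k * pow_deriv a z k) * y" for k
    using pow_deriv_bimod[OF assms] centerD[OF central, of k x] by (simp flip: mult.assoc)
  then show ?thesis by (simp add: deriv_map_def sum_distrib_left sum_distrib_right)
qed

lemma deriv_map_add: "deriv_map c n a (z + w) = deriv_map c n a z + deriv_map c n a w"
  by (simp add: deriv_map_def pow_deriv_add distrib_left sum.distrib)

lemma deriv_map_one:
  "deriv_map c (Suc m) a 1 = (\<Sum>j\<le>m. of_nat (Suc j) * c (Suc j) * a ^ j)"
  unfolding deriv_map_def sum.atMost_Suc_shift
  by (simp add: pow_deriv_one mult_of_nat_commute mult.assoc del: pow_deriv.simps(2) of_nat_Suc)

end

definition unital_bimodule_map :: "'a::ring_1 set \<Rightarrow> ('a \<Rightarrow> 'a) \<Rightarrow> bool" where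
  "unital_bimodule_map K f \<longleftrightarrow> f 1 = 1 \<and> (\<forall>z w. f (z + w) = f z + f w) \<and>
     (\<forall>k\<in>K. \<forall>l\<in>K. \<forall>z. f (k * z * l) = k * f z * l)"

lemma unital_bimodule_map_id: "unital_bimodule_map K id"
  by (simp add: unital_bimodule_map_def)

lemma unital_bimodule_map_comp:
  "unital_bimodule_map K f \<Longrightarrow> unital_bimodule_map K g \<Longrightarrow> unital_bimodule_map K (g \<circ> f)"
  by (simp add: unital_bimodule_map_def)

lemma commuting_projection:
  fixes a :: "'d::{division_ring, ring_char_0}"
  assumes fd: "finite_dim_over_center TYPE('d)" and K: "\<And>k. k \<in> K \<Longrightarrow> k * a = a * k"
  obtains g where "unital_bimodule_map K g" "\<And>z. a * g z = g z * a"
    "\<And>b z. b * a = a * b \<Longrightarrow> b * z = z * b \<Longrightarrow> b * g z = g z * b"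
proof -
  obtain m c where central: "\<And>k. c k \<in> center" and root: "(\<Sum>k\<le>Suc m. c k * a ^ k) = 0"
    and separable: "(\<Sum>j\<le>m. of_nat (Suc j) * c (Suc j) * a ^ j) \<noteq> 0"
    using separable_relation[OF fd] by blast
  define D where "D = deriv_map c (Suc m) a"
  have D1: "D 1 \<noteq> 0" using separable deriv_map_one[OF central] by (simp add: D_def)
  have D_commutes: "a * D z = D z * a" for z
    unfolding D_def by (rule deriv_map_commutes[OF central root])
  have D_bimod: "D (x * z * y) = x * D z * y" if "x * a = a * x" "y * a = a * y" for x y z
    unfolding D_def by (rule deriv_map_bimod[OF central that])
  have D_centralizes: "b * D z = D z * b" if "b * a = a * b" "b * z = z * b" for b z
    using D_bimod[of b 1 z] D_bimod[of 1 b z] that by simp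
  define g where "g z = inverse (D 1) * D z" for z
  have inv_commutes: "b * inverse (D 1) = inverse (D 1) * b" if "b * a = a * b" for b
    using mult_commute_imp_mult_inverse_commute[of "D 1" b] D_centralizes[OF that, of 1] by simp
  have "unital_bimodule_map K g"
    unfolding unital_bimodule_map_def
  proof (intro conjI allI ballI)
    show "g 1 = 1" using D1 by (simp add: g_def)
    show "g (z + w) = g z + g w" for z w
      by (simp add: g_def D_def deriv_map_add[OF central] distrib_left)
    show "g (k * z * l) = k * g z * l" if "k \<in> K" "l \<in> K" for k l z
      using D_bimod[OF K K, OF that, of z] inv_commutes[OF K, OF that(1)]
      by (simp add: g_def) (metis mult.assoc)
  qed
  moreover have "a * g z = g z * a" for z
    using inv_commutes[of a] D_commutes[of z] by (simp add: g_def) (metis mult.assoc)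
  moreover have "b * g z = g z * b" if "b * a = a * b" "b * z = z * b" for b z
    using inv_commutes[OF that(1)] D_centralizes[OF that] by (simp add: g_def) (metis mult.assoc)
  ultimately show ?thesis using that by blast
qed

lemma finite_commuting_projection:
  fixes K :: "'d::{division_ring, ring_char_0} set"
  assumes fd: "finite_dim_over_center TYPE('d)"
    and K_comm: "\<And>x y. x \<in> K \<Longrightarrow> y \<in> K \<Longrightarrow> x * y = y * x"
    and "finite A" "A \<subseteq> K"
  shows "\<exists>f. unital_bimodule_map K f \<and> (\<forall>z. \<forall>b\<in>A. b * f z = f z * b)"
  using \<open>finite A\<close> \<open>A \<subseteq> K\<close>
proof (induction A rule: finite_induct)
  case empty
  show ?case using unital_bimodule_map_id by blast
next
  case (insert a A)
  then obtain f where f: "unital_bimodule_map K f" "\<And>z b. b \<in> A \<Longrightarrow> b * f z = f z * b"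
    by auto
  have "a \<in> K" using insert.prems by simp
  then obtain g where g: "unital_bimodule_map K g" "\<And>z. a * g z = g z * a"
    "\<And>b z. b * a = a * b \<Longrightarrow> b * z = z * b \<Longrightarrow> b * g z = g z * b"
    using commuting_projection[OF fd, of K a] K_comm by blast
  have "b * g (f z) = g (f z) * b" if "b \<in> insert a A" for b z
  proof (cases "b = a")
    case False
    then have "b \<in> A" using that by simp
    moreover from this have "b * a = a * b" using K_comm \<open>a \<in> K\<close> insert.prems by blast
    ultimately show ?thesis using f(2) g(3) by blast
  qed (use g(2) in simp)
  then show ?case using unital_bimodule_map_comp[OF f(1) g(1)] by auto
qed

lemma centralizer_subspace: "cspace.subspace (centralizer {x :: 'a::division_ring})"
proof (rule cspace.subspaceI)
  fix c :: "'a central" and y assume "y \<in> centralizer {x}"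
  then show "Rep_central c * y \<in> centralizer {x}"
    using centerD[OF Rep_central[simplified], of c x]
    by (simp add: centralizer_def) (metis mult.assoc)
qed (auto simp: centralizer_def algebra_simps)

(* Taking A an F-basis of K, the centralizer of A is that of K, which is K by maximality. *)
lemma projection_onto_maximal_subfield:
  fixes K :: "'d::{division_ring, ring_char_0} set"
  assumes fd: "finite_dim_over_center TYPE('d)" and K: "maximal_subfield K"
  obtains f where "unital_bimodule_map K f" "\<And>z. f z \<in> K"
proof -
  have K_comm: "\<And>x y. x \<in> K \<Longrightarrow> y \<in> K \<Longrightarrow> x * y = y * x"
    using K by (simp add: maximal_subfield_def is_subfield_def)
  obtain N where bound: "\<And>S::'d set. cspace.independent S \<Longrightarrow> finite S \<and> card S \<le> N"
    using independent_card_bound[OF fd] by blast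
  obtain A where A: "A \<subseteq> K" "cspace.independent A" "K \<subseteq> cspace.span A"
    using cspace.maximal_independent_subset[of K] by blast
  obtain f where f: "unital_bimodule_map K f" "\<And>z b. b \<in> A \<Longrightarrow> b * f z = f z * b"
    using finite_commuting_projection[OF fd K_comm _ A(1)] bound[OF A(2)] by blast
  have "f z \<in> K" for z
  proof -
    have "A \<subseteq> centralizer {f z}" using f(2) by (auto simp: centralizer_def)
    then have "K \<subseteq> centralizer {f z}"
      using cspace.span_minimal[OF _ centralizer_subspace] A(3) by blast
    then have "f z \<in> centralizer K" by (auto simp: centralizer_def)
    then show ?thesis using K by (simp add: maximal_subfield_def)
  qed
  then show ?thesis using that f(1) by blast
qed

lemma involution_simps:
  fixes star :: "'a::division_ring \<Rightarrow> 'a"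
  assumes "is_involution star"
  shows "star (x + y) = star x + star y" "star (x * y) = star y * star x" "star (star x) = x"
    and "star 1 = 1" "star (of_nat n) = of_nat n" "star (inverse x) = inverse (star x)"
proof -
  show add: "star (x + y) = star x + star y" and mult: "star (x * y) = star y * star x"
    and invol: "star (star x) = x" for x y
    using assms by (auto simp: is_involution_def)
  show one: "star 1 = 1" using mult[of "star 1" 1] invol[of 1] by simp
  have "star 0 = 0" using add[of 0 0] by simp
  then show "star (of_nat n) = of_nat n" by (induction n) (simp_all add: add one)
  show "star (inverse x) = inverse (star x)"
  proof (cases "x = 0")
    case False
    then have "star x * star (inverse x) = 1" using mult[of "inverse x" x] one by simp
    then show ?thesis by (simp add: inverse_unique)
  qed (use \<open>star 0 = 0\<close> in simp)
qed

(* Averaging f with z \<mapsto> star(f(star z)) makes it compatible with the involution; 1/2 exists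
   and is central in characteristic 0, and lies in every subfield. *)
lemma symmetrization:
  fixes star :: "'d::{division_ring, ring_char_0} \<Rightarrow> 'd"
  assumes inv: "is_involution star" and K: "is_subfield K" "star ` K \<subseteq> K"
    and f: "unital_bimodule_map K f" "\<And>z. f z \<in> K"
  obtains h where "unital_bimodule_map K h" "\<And>z. h z \<in> K" "\<And>z. h (star z) = star (h z)"
proof -
  define half :: 'd where "half = inverse 2"
  have half_commutes: "half * x = x * half" for x
    using mult_inverse_of_nat_commute[of 2 x] by (simp add: half_def)
  have two_halves: "(1 + 1) * half = 1" by (simp add: half_def)
  have "half \<in> K" using K(1) unfolding half_def is_subfield_def one_add_one[symmetric] by blast
  have star_half: "star half = half"
    using involution_simps(5,6)[OF inv, of 2] by (simp add: half_def)
  note star = involution_simps[OF inv]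
  have K_closed: "x + y \<in> K" "x * y \<in> K" if "x \<in> K" "y \<in> K" for x y
    using K(1) that by (auto simp: is_subfield_def)
  have K_star: "star x \<in> K" if "x \<in> K" for x
    using K(2) that by blast
  have f_add: "f (z + w) = f z + f w" for z w
    using f(1) by (simp add: unital_bimodule_map_def)
  have f_bimod: "f (k * z * l) = k * f z * l" if "k \<in> K" "l \<in> K" for z k l
    using f(1) that by (simp add: unital_bimodule_map_def)
  define h where "h z = (f z + star (f (star z))) * half" for z
  have "unital_bimodule_map K h"
    unfolding unital_bimodule_map_def
  proof (intro conjI allI ballI)
    show "h 1 = 1" using f(1) two_halves by (simp add: h_def star unital_bimodule_map_def)
    show "h (z + w) = h z + h w" for z w
      by (simp add: h_def f_add star distrib_right)
    show "h (k * z * l) = k * h z * l" if kl: "k \<in> K" "l \<in> K" for k l z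
    proof -
      have "star (f (star (k * z * l))) = star (star l * f (star z) * star k)"
        using f_bimod[OF K_star[OF kl(2)] K_star[OF kl(1)]]
        by (simp add: star mult.assoc)
      also have "\<dots> = k * star (f (star z)) * l" by (simp add: star mult.assoc)
      finally have "h (k * z * l) = k * (f z + star (f (star z))) * l * half"
        using f_bimod[OF kl] by (simp add: h_def algebra_simps)
      then show ?thesis by (simp add: h_def half_commutes mult.assoc)
    qed
  qed
  moreover have "h z \<in> K" for z
    unfolding h_def using f(2) \<open>half \<in> K\<close> by (intro K_closed K_star)
  moreover have "h (star z) = star (h z)" for z
  proof -
    have "star (h z) = half * (star (f z) + f (star z))"
      by (simp add: h_def star star_half)
    then show ?thesis by (simp add: h_def star half_commutes add.commute)
  qed
  ultimately show ?thesis using that by blast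
qed

theorem proposition2p3:
  fixes star :: "'d::{division_ring, ring_char_0} \<Rightarrow> 'd"
    and K :: "'d set"
  assumes "finite_dim_over_center TYPE('d)"
    and "is_involution star"
    and "maximal_subfield K"
    and "star ` K \<subseteq> K"
  shows "\<exists>f :: 'd \<Rightarrow> 'd.
           (\<forall>z. f z \<in> K) \<and>
           f 1 = 1 \<and>
           (\<forall>z. f (star z) = star (f z)) \<and>
           (\<forall>k\<in>K. \<forall>l\<in>K. \<forall>z. f (k * z * l) = k * f z * l) \<and>
           (\<forall>x y. f (x + y) = f x + f y)"
proof -
  obtain f where f: "unital_bimodule_map K f" "\<And>z. f z \<in> K"
    using projection_onto_maximal_subfield[OF assms(1,3)] by blast
  have "is_subfield K" using assms(3) by (simp add: maximal_subfield_def)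
  then obtain h where "unital_bimodule_map K h" "\<And>z. h z \<in> K" "\<And>z. h (star z) = star (h z)"
    using symmetrization[OF assms(2) _ assms(4) f] by blast
  then show ?thesis unfolding unital_bimodule_map_def by blast
qed

end
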